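(* Let $G$ be a finite simple connected graph, let $S\subseteq V(G)$ with $|S|\geq 2$, and let $T_1,\dots,T_k$ ($k\geq 2$) be $S$-Steiner trees in $G$. Then $T_1,\dots,T_k$ are completely independent $S$-Steiner trees if and only if they are pairwise edge-disjoint and, for every vertex $w\in V(G)$, there is at most one index $i$ with $d_{T_i}(w)>1$.
   Context: For $S\subseteq V(G)$ with $|S|\ge 2$, an $S$-Steiner tree of $G$ is a subtree $T$ of $G$ with $S\subseteq V(T)$ all of whose leaves belong to $S$. $S$-Steiner trees $T_1,\dots,T_k$ are called completely independent $S$-Steiner trees (CISSTs) if for all $1\le p<q\le k$: $E(T_p)\cap E(T_q)=\emptyset$, $V(T_p)\cap V(T_q)=S$, and for any two vertices $x_1,x_2\in S$ the $(x_1,x_2)$-paths in $T_p$ and in $T_q$ are internally disjoint. $d_{T}(w)$ denotes the degree of $w$ in $T$ (taken to be $0$ if $w\notin V(T)$). *)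

theory Defs
  imports Main
begin

definition simple_graph :: "'a set \<Rightarrow> 'a set set \<Rightarrow> bool" where
  "simple_graph V E \<longleftrightarrow> finite V \<and>
     (\<forall>e\<in>E. \<exists>u v. e = {u, v} \<and> u \<noteq> v \<and> u \<in> V \<and> v \<in> V)"

definition is_path :: "'a set \<Rightarrow> 'a set set \<Rightarrow> 'a list \<Rightarrow> bool" where
  "is_path V E p \<longleftrightarrow> p \<noteq> [] \<and> distinct p \<and> set p \<subseteq> V \<and>
     (\<forall>i. Suc i < length p \<longrightarrow> {p ! i, p ! Suc i} \<in> E)"

definition connected_graph :: "'a set \<Rightarrow> 'a set set \<Rightarrow> bool" where
  "connected_graph V E \<longleftrightarrow> V \<noteq> {} \<and>
     (\<forall>u\<in>V. \<forall>v\<in>V. \<exists>p. is_path V E p \<and> hd p = u \<and> last p = v)"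

definition has_cycle :: "'a set \<Rightarrow> 'a set set \<Rightarrow> bool" where
  "has_cycle V E \<longleftrightarrow> (\<exists>p. is_path V E p \<and> 3 \<le> length p \<and> {last p, hd p} \<in> E)"

definition is_tree :: "'a set \<Rightarrow> 'a set set \<Rightarrow> bool" where
  "is_tree V E \<longleftrightarrow> simple_graph V E \<and> connected_graph V E \<and> \<not> has_cycle V E"

definition degree :: "'a set set \<Rightarrow> 'a \<Rightarrow> nat" where
  "degree E w = card {e \<in> E. w \<in> e}"

definition steiner_tree :: "'a set \<Rightarrow> 'a set set \<Rightarrow> 'a set \<Rightarrow> 'a set \<Rightarrow> 'a set set \<Rightarrow> bool" where
  "steiner_tree V E S VT ET \<longleftrightarrow> VT \<subseteq> V \<and> ET \<subseteq> E \<and> is_tree VT ET \<and> S \<subseteq> VT \<and>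
     (\<forall>v\<in>VT. degree ET v = 1 \<longrightarrow> v \<in> S)"

text \<open>Completely independent S-Steiner trees T_0,...,T_{k-1}, where T_i = (VT i, ET i).
Internally disjoint (x1,x2)-paths: they share no vertex other than x1, x2.\<close>
definition CISST :: "'a set \<Rightarrow> 'a set set \<Rightarrow> 'a set \<Rightarrow> nat \<Rightarrow> (nat \<Rightarrow> 'a set) \<Rightarrow> (nat \<Rightarrow> 'a set set) \<Rightarrow> bool" where
  "CISST V E S k VT ET \<longleftrightarrow>
     (\<forall>i<k. steiner_tree V E S (VT i) (ET i)) \<and>
     (\<forall>p<k. \<forall>q<k. p < q \<longrightarrow>
        ET p \<inter> ET q = {} \<and> VT p \<inter> VT q = S \<and>
        (\<forall>x1\<in>S. \<forall>x2\<in>S. \<forall>P Q.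
            is_path (VT p) (ET p) P \<and> hd P = x1 \<and> last P = x2 \<and>
            is_path (VT q) (ET q) Q \<and> hd Q = x1 \<and> last Q = x2
            \<longrightarrow> set P \<inter> set Q \<subseteq> {x1, x2}))"

end

theory Submission
  imports Defs
begin

(* A vertex w of degree at least 2 in an S-Steiner tree separates two terminals: each of its
   edges extends to a path ending in a leaf, and leaves lie in S. If w has degree at least 2 in
   two trees, a choice among three such terminals gives x, y in S separated by w in both trees,
   so the two (x,y)-paths share the inner vertex w. Conversely, a common non-terminal vertex,
   or a common inner vertex of two terminal paths, has degree at least 2 in both trees. *)

lemma is_path_Nil [simp]: "\<not> is_path V E []"
  by (simp add: is_path_def)

lemma is_path_singleton [simp]: "is_path V E [x] \<longleftrightarrow> x \<in> V"
  by (simp add: is_path_def)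

lemma is_path_Cons_Cons [simp]:
  "is_path V E (x # y # xs) \<longleftrightarrow>
     x \<in> V \<and> {x, y} \<in> E \<and> x \<notin> set (y # xs) \<and> is_path V E (y # xs)"
  unfolding is_path_def by (auto simp: nth_Cons split: nat.splits)

lemma is_path_append:
  assumes "xs \<noteq> []" "ys \<noteq> []"
  shows "is_path V E (xs @ ys) \<longleftrightarrow>
    is_path V E xs \<and> is_path V E ys \<and> {last xs, hd ys} \<in> E \<and> set xs \<inter> set ys = {}"
  using assms
proof (induction xs rule: induct_list012)
  case (2 x)
  then show ?case by (cases ys) auto
qed auto

lemma is_path_rev [simp]: "is_path V E (rev xs) \<longleftrightarrow> is_path V E xs"
proof (induction xs rule: induct_list012)
  case (3 x y zs)
  then show ?case
    using is_path_append[of "rev zs @ [y]" "[x]" V E] by (auto simp: insert_commute)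
qed auto

lemma is_path_appendD1: "is_path V E (xs @ ys) \<Longrightarrow> xs \<noteq> [] \<Longrightarrow> is_path V E xs"
  by (cases "ys = []") (auto simp: is_path_append)

lemma is_path_appendD2: "is_path V E (xs @ ys) \<Longrightarrow> ys \<noteq> [] \<Longrightarrow> is_path V E ys"
  by (cases "xs = []") (auto simp: is_path_append)

lemma simple_graph_finite_edges: "simple_graph V E \<Longrightarrow> finite E"
  unfolding simple_graph_def
  by (rule finite_subset[of E "Pow V"]) auto

lemma simple_graph_edgeD: "simple_graph V E \<Longrightarrow> {x, y} \<in> E \<Longrightarrow> x \<noteq> y \<and> x \<in> V \<and> y \<in> V"
  unfolding simple_graph_def by (metis doubleton_eq_iff insertI1)

lemma simple_graph_incident_edge:
  assumes "simple_graph V E" "e \<in> E" "w \<in> e"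
  obtains u where "e = {w, u}"
  using assms unfolding simple_graph_def by (metis insert_commute insertE singletonD)

lemma degree_pos_iff:
  assumes "simple_graph V E"
  shows "0 < degree E w \<longleftrightarrow> (\<exists>u. {w, u} \<in> E)"
proof -
  have "finite {e \<in> E. w \<in> e}"
    using simple_graph_finite_edges[OF assms] by simp
  then show ?thesis
    unfolding degree_def using simple_graph_incident_edge[OF assms]
    by (auto simp: card_gt_0_iff) metis
qed

lemma one_less_degree_iff:
  assumes "simple_graph V E"
  shows "1 < degree E w \<longleftrightarrow> (\<exists>a b. a \<noteq> b \<and> {w, a} \<in> E \<and> {w, b} \<in> E)"
proof -
  have "finite {e \<in> E. w \<in> e}"
    using simple_graph_finite_edges[OF assms] by simp
  then have "1 < degree E w \<longleftrightarrow> (\<exists>e1\<in>E. \<exists>e2\<in>E. w \<in> e1 \<and> w \<in> e2 \<and> e1 \<noteq> e2)"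
    unfolding degree_def by (auto simp: card_le_Suc0_iff_eq not_le[symmetric])
  also have "\<dots> \<longleftrightarrow> (\<exists>a b. a \<noteq> b \<and> {w, a} \<in> E \<and> {w, b} \<in> E)"
  proof
    assume "\<exists>e1\<in>E. \<exists>e2\<in>E. w \<in> e1 \<and> w \<in> e2 \<and> e1 \<noteq> e2"
    then obtain e1 e2 where "e1 \<in> E" "e2 \<in> E" "w \<in> e1" "w \<in> e2" "e1 \<noteq> e2" by blast
    then show "\<exists>a b. a \<noteq> b \<and> {w, a} \<in> E \<and> {w, b} \<in> E"
      using simple_graph_incident_edge[OF assms] by metis
  next
    assume "\<exists>a b. a \<noteq> b \<and> {w, a} \<in> E \<and> {w, b} \<in> E"
    then show "\<exists>e1\<in>E. \<exists>e2\<in>E. w \<in> e1 \<and> w \<in> e2 \<and> e1 \<noteq> e2"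
      by (metis doubleton_eq_iff insertI1)
  qed
  finally show ?thesis .
qed

lemma one_less_degree_in_vertices: "simple_graph V E \<Longrightarrow> 1 < degree E w \<Longrightarrow> w \<in> V"
  by (metis one_less_degree_iff simple_graph_edgeD)

lemma has_cycle_if_branches_meet:
  assumes A: "is_path V E (u # A)" and B: "is_path V E (u # B)"
    and ne: "A \<noteq> []" "B \<noteq> []" and hd: "hd A \<noteq> hd B" and meet: "set A \<inter> set B \<noteq> {}"
  shows "has_cycle V E"
proof -
  obtain B1 v B2 where B_eq: "B = B1 @ v # B2" and "v \<in> set A" and B1: "\<forall>y\<in>set B1. y \<notin> set A"
    using meet split_list_first_prop[of B "\<lambda>x. x \<in> set A"] by blast
  then obtain A1 A2 where A_eq: "A = A1 @ v # A2" by (meson split_list)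
  define C where "C = (u # A1 @ [v]) @ rev B1"
  have pA: "is_path V E (u # A1 @ [v])"
    using A A_eq is_path_appendD1[of V E "u # A1 @ [v]" A2] by simp
  have pB: "is_path V E (u # B1 @ [v])"
    using B B_eq is_path_appendD1[of V E "u # B1 @ [v]" B2] by simp
  have "u \<notin> set B" using B ne by (cases B) auto
  have "is_path V E C"
  proof (cases "B1 = []")
    case True
    then show ?thesis using pA by (simp add: C_def)
  next
    case False
    have "is_path V E (B1 @ [v])" using pB is_path_appendD2[of V E "[u]" "B1 @ [v]"] by simp
    then have "{last B1, v} \<in> E" "is_path V E B1"
      using False is_path_append[of B1 "[v]" V E] by auto
    then show ?thesis unfolding C_def
      using is_path_append[of "u # A1 @ [v]" "rev B1" V E] False pA B1 A_eq B_eq \<open>u \<notin> set B\<close>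
      by (auto simp: hd_rev insert_commute)
  qed
  moreover have "last C = hd B"
    using B_eq by (cases B1) (auto simp: C_def last_rev)
  moreover have "{u, hd B} \<in> E" using B ne by (cases B) auto
  moreover have "A1 \<noteq> [] \<or> B1 \<noteq> []" using hd A_eq B_eq by auto
  then have "3 \<le> length C" by (auto simp: C_def Suc_le_eq)
  ultimately show ?thesis
    unfolding has_cycle_def by (auto simp: C_def insert_commute)
qed

lemma has_cycle_if_path_closes:
  assumes "is_path V E (xs @ z # ys)" "2 \<le> length ys" "{last ys, z} \<in> E"
  shows "has_cycle V E"
  unfolding has_cycle_def
  using is_path_appendD2[OF assms(1)] assms(2,3) by (intro exI[of _ "z # ys"]) auto

lemma path_length_le_card: "is_path V E p \<Longrightarrow> finite V \<Longrightarrow> length p \<le> card V"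
  by (metis card_mono distinct_card is_path_def)

lemma acyclic_path_extends_to_leaf:
  assumes sg: "simple_graph V E" and acyclic: "\<not> has_cycle V E"
  shows "is_path V E p \<Longrightarrow> 2 \<le> length p \<Longrightarrow> \<exists>q. is_path V E (p @ q) \<and> degree E (last (p @ q)) = 1"
proof (induction "card V - length p" arbitrary: p rule: less_induct)
  case less
  obtain xs y v where p_eq: "p = xs @ [y, v]"
  proof (cases p rule: rev_cases)
    case (snoc p' v)
    with less.prems(2) show ?thesis
      by (cases p' rule: rev_cases) (auto intro: that)
  qed (use less.prems(2) in simp)
  have "{y, v} \<in> E"
    using less.prems(1) is_path_appendD2[of V E xs "[y, v]"] by (simp add: p_eq)
  then have "0 < degree E v" using degree_pos_iff[OF sg] by (metis insert_commute)
  show ?case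
  proof (cases "degree E v = 1")
    case True
    then show ?thesis using less.prems(1) by (intro exI[of _ "[]"]) (simp add: p_eq)
  next
    case False
    with \<open>0 < degree E v\<close> have "1 < degree E v" by linarith
    then obtain z where z: "{v, z} \<in> E" "z \<noteq> y" using one_less_degree_iff[OF sg] by metis
    have "z \<notin> set p"
    proof
      assume "z \<in> set p"
      moreover have "z \<noteq> v" using simple_graph_edgeD[OF sg z(1)] by auto
      ultimately have "z \<in> set xs" using z(2) by (simp add: p_eq)
      then obtain X Y where "xs = X @ z # Y" by (meson split_list)
      then show False
        using has_cycle_if_path_closes[of V E X z "Y @ [y, v]"] less.prems(1) z(1) acyclic
        by (simp add: p_eq insert_commute)
    qed
    then have ext: "is_path V E (p @ [z])"
      using less.prems(1) z(1) simple_graph_edgeD[OF sg z(1)] is_path_append[of p "[z]" V E]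
      by (auto simp: p_eq)
    have "finite V" using sg by (simp add: simple_graph_def)
    then have "card V - length (p @ [z]) < card V - length p"
      using path_length_le_card[OF ext] by simp
    from less.hyps[OF this ext] obtain q where "is_path V E (p @ [z] @ q)" "degree E (last (p @ [z] @ q)) = 1"
      using less.prems(2) by auto
    then show ?thesis by blast
  qed
qed

lemma steiner_tree_edge_extends_to_terminal:
  assumes st: "steiner_tree V E S VT ET" and e: "{w, u} \<in> ET"
  shows "\<exists>R. is_path VT ET (w # u # R) \<and> last (u # R) \<in> S"
proof -
  have sg: "simple_graph VT ET" and acyclic: "\<not> has_cycle VT ET"
    and leaves: "\<forall>v\<in>VT. degree ET v = 1 \<longrightarrow> v \<in> S"
    using st unfolding steiner_tree_def is_tree_def by auto
  have "is_path VT ET [w, u]" using e simple_graph_edgeD[OF sg e] by simp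
  then obtain R where R: "is_path VT ET (w # u # R)" "degree ET (last (u # R)) = 1"
    using acyclic_path_extends_to_leaf[OF sg acyclic, of "[w, u]"] by auto
  moreover have "last (u # R) \<in> VT"
    using R(1) unfolding is_path_def by (metis last_ConsR last_in_set list.distinct(1) subsetD)
  ultimately show ?thesis using leaves by blast
qed

lemma steiner_tree_nonterminal_one_less_degree:
  assumes st: "steiner_tree V E S VT ET" and "S \<noteq> {}" and v: "v \<in> VT" "v \<notin> S"
  shows "1 < degree ET v"
proof -
  have sg: "simple_graph VT ET" and conn: "connected_graph VT ET" and "S \<subseteq> VT"
    and leaves: "\<forall>v\<in>VT. degree ET v = 1 \<longrightarrow> v \<in> S"
    using st unfolding steiner_tree_def is_tree_def by auto
  obtain s where "s \<in> S" using \<open>S \<noteq> {}\<close> by auto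
  then obtain p where p: "is_path VT ET p" "hd p = v" "last p = s"
    using conn v \<open>S \<subseteq> VT\<close> unfolding connected_graph_def by blast
  with v \<open>s \<in> S\<close> obtain y R where "p = v # y # R"
    by (cases p; cases "tl p") auto
  then have "0 < degree ET v" using p(1) degree_pos_iff[OF sg] by auto
  moreover have "degree ET v \<noteq> 1" using leaves v by auto
  ultimately show ?thesis by simp
qed

lemma path_inner_vertex_one_less_degree:
  assumes sg: "simple_graph V E" and P: "is_path V E P"
    and w: "w \<in> set P" "w \<noteq> hd P" "w \<noteq> last P"
  shows "1 < degree E w"
proof -
  obtain A B where P_eq: "P = A @ w # B" using w(1) by (meson split_list)
  have "A \<noteq> []" "B \<noteq> []" using P_eq w(2,3) by auto
  then have "{last A, w} \<in> E" "is_path V E (w # B)" "set A \<inter> set (w # B) = {}"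
    using P is_path_append[of A "w # B" V E] by (auto simp: P_eq)
  moreover from this \<open>B \<noteq> []\<close> have "{w, hd B} \<in> E" by (cases B) auto
  moreover from calculation \<open>A \<noteq> []\<close> \<open>B \<noteq> []\<close> have "last A \<noteq> hd B"
    by (metis disjoint_iff last_in_set list.set_intros(2) list.set_sel(1))
  ultimately show ?thesis
    using one_less_degree_iff[OF sg] by (metis insert_commute)
qed

(* In a tree this says that removing w separates x from y. *)
definition distinct_branches :: "'a set \<Rightarrow> 'a set set \<Rightarrow> 'a \<Rightarrow> 'a \<Rightarrow> 'a \<Rightarrow> bool" where
  "distinct_branches V E w x y \<longleftrightarrow>
     (\<exists>u1 u2 R1 R2. u1 \<noteq> u2 \<and>
        is_path V E (w # u1 # R1) \<and> last (u1 # R1) = x \<and>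
        is_path V E (w # u2 # R2) \<and> last (u2 # R2) = y)"

lemma distinct_branches_sym: "distinct_branches V E w x y \<Longrightarrow> distinct_branches V E w y x"
  unfolding distinct_branches_def by metis

lemma distinct_branches_neq: "distinct_branches V E w x y \<Longrightarrow> x \<noteq> w \<and> y \<noteq> w"
  unfolding distinct_branches_def by (metis is_path_Cons_Cons last_in_set list.distinct(1))

lemma distinct_branches_cases:
  assumes conn: "connected_graph V E" and "w \<in> V" and xy: "distinct_branches V E w x y"
    and z: "z \<in> V" "z \<noteq> w"
  shows "distinct_branches V E w z x \<or> distinct_branches V E w z y"
proof -
  obtain p where p: "is_path V E p" "hd p = w" "last p = z"
    using conn \<open>w \<in> V\<close> z(1) unfolding connected_graph_def by blast
  with z(2) obtain u R where "p = w # u # R"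
    by (cases p; cases "tl p") auto
  (* the first step from w towards z differs from that towards x or from that towards y *)
  with p xy show ?thesis
    unfolding distinct_branches_def by (metis last_ConsR list.distinct(1))
qed

lemma path_through_if_distinct_branches:
  assumes acyclic: "\<not> has_cycle V E" and xy: "distinct_branches V E w x y"
  shows "\<exists>P. is_path V E P \<and> hd P = x \<and> last P = y \<and> w \<in> set P"
proof -
  obtain u1 u2 R1 R2 where u: "u1 \<noteq> u2" "is_path V E (w # u1 # R1)" "last (u1 # R1) = x"
      "is_path V E (w # u2 # R2)" "last (u2 # R2) = y"
    using xy unfolding distinct_branches_def by blast
  have "set (u1 # R1) \<inter> set (u2 # R2) = {}"
    using has_cycle_if_branches_meet[of V E w "u1 # R1" "u2 # R2"] u acyclic by auto
  moreover have "w \<notin> set (u1 # R1)" using u(2) by simp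
  ultimately have "is_path V E (rev (u1 # R1) @ w # u2 # R2)"
    using u(2,4) is_path_append[of "rev (u1 # R1)" "w # u2 # R2" V E]
    by (auto simp del: rev.simps simp: last_rev insert_commute)
  moreover have "hd (rev (u1 # R1) @ w # u2 # R2) = x"
    using u(3) by (cases R1 rule: rev_cases) auto
  ultimately show ?thesis using u(5) by (intro exI[of _ "rev (u1 # R1) @ w # u2 # R2"]) auto
qed

lemma steiner_tree_branching_vertex_separates_terminals:
  assumes st: "steiner_tree V E S VT ET" and "1 < degree ET w"
  shows "\<exists>x\<in>S. \<exists>y\<in>S. distinct_branches VT ET w x y"
proof -
  have "simple_graph VT ET" using st unfolding steiner_tree_def is_tree_def by auto
  then obtain a b where "a \<noteq> b" "{w, a} \<in> ET" "{w, b} \<in> ET"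
    using \<open>1 < degree ET w\<close> one_less_degree_iff by metis
  moreover obtain R1 where "is_path VT ET (w # a # R1)" "last (a # R1) \<in> S"
    using steiner_tree_edge_extends_to_terminal[OF st \<open>{w, a} \<in> ET\<close>] by blast
  moreover obtain R2 where "is_path VT ET (w # b # R2)" "last (b # R2) \<in> S"
    using steiner_tree_edge_extends_to_terminal[OF st \<open>{w, b} \<in> ET\<close>] by blast
  ultimately show ?thesis
    unfolding distinct_branches_def by blast
qed

lemma steiner_trees_common_separated_terminals:
  assumes stP: "steiner_tree V E S VP EP" and stQ: "steiner_tree V E S VQ EQ"
    and "1 < degree EP w" "1 < degree EQ w"
  shows "\<exists>x\<in>S. \<exists>y\<in>S. distinct_branches VP EP w x y \<and> distinct_branches VQ EQ w x y"
proof -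
  have "S \<subseteq> VP" "connected_graph VP EP" "simple_graph VP EP"
    using stP unfolding steiner_tree_def is_tree_def by auto
  then have splitP: "distinct_branches VP EP w z x \<or> distinct_branches VP EP w z y"
    if "distinct_branches VP EP w x y" "z \<in> S" "z \<noteq> w" for x y z
    using distinct_branches_cases one_less_degree_in_vertices assms(3) that
    by (metis subsetD)
  have "S \<subseteq> VQ" "connected_graph VQ EQ" "simple_graph VQ EQ"
    using stQ unfolding steiner_tree_def is_tree_def by auto
  then have splitQ: "distinct_branches VQ EQ w z x \<or> distinct_branches VQ EQ w z y"
    if "distinct_branches VQ EQ w x y" "z \<in> S" "z \<noteq> w" for x y z
    using distinct_branches_cases one_less_degree_in_vertices assms(4) that
    by (metis subsetD)
  obtain a1 a2 where a: "a1 \<in> S" "a2 \<in> S" "distinct_branches VP EP w a1 a2"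
    using steiner_tree_branching_vertex_separates_terminals[OF stP] assms(3) by blast
  have "a1 \<noteq> w" "a2 \<noteq> w" using distinct_branches_neq[OF a(3)] by auto
  obtain b1 b2 where b: "b1 \<in> S" "b2 \<in> S" "distinct_branches VQ EQ w b1 b2"
    using steiner_tree_branching_vertex_separates_terminals[OF stQ] assms(4) by blast
  obtain c where c: "c \<in> S" "distinct_branches VQ EQ w a1 c"
    using splitQ[OF b(3) a(1) \<open>a1 \<noteq> w\<close>] b(1,2) by blast
  have "c \<noteq> w" using distinct_branches_neq[OF c(2)] by auto
  show ?thesis
  proof (cases "distinct_branches VQ EQ w a1 a2")
    case True
    then show ?thesis using a by blast
  next
    case False
    then have Q_a2_c: "distinct_branches VQ EQ w a2 c"
      using splitQ[OF distinct_branches_sym[OF c(2)] a(2) \<open>a2 \<noteq> w\<close>]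
        distinct_branches_sym[of VQ EQ w a2 a1] by blast
    from splitP[OF a(3) c(1) \<open>c \<noteq> w\<close>] show ?thesis
    proof
      assume "distinct_branches VP EP w c a1"
      then show ?thesis using a(1) c(1) distinct_branches_sym[OF c(2)] by blast
    next
      assume "distinct_branches VP EP w c a2"
      then show ?thesis using a(2) c(1) distinct_branches_sym[OF Q_a2_c] by blast
    qed
  qed
qed

lemma steiner_trees_crossing_terminal_paths:
  assumes stP: "steiner_tree V E S VP EP" and stQ: "steiner_tree V E S VQ EQ"
    and "1 < degree EP w" "1 < degree EQ w"
  shows "\<exists>x\<in>S. \<exists>y\<in>S. \<exists>P Q. is_path VP EP P \<and> hd P = x \<and> last P = y \<and>
    is_path VQ EQ Q \<and> hd Q = x \<and> last Q = y \<and> \<not> set P \<inter> set Q \<subseteq> {x, y}"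
proof -
  obtain x y where xy: "x \<in> S" "y \<in> S" "distinct_branches VP EP w x y" "distinct_branches VQ EQ w x y"
    using steiner_trees_common_separated_terminals[OF assms] by blast
  have "\<not> has_cycle VP EP" "\<not> has_cycle VQ EQ"
    using stP stQ unfolding steiner_tree_def is_tree_def by auto
  then obtain P Q where "is_path VP EP P" "hd P = x" "last P = y" "w \<in> set P"
    "is_path VQ EQ Q" "hd Q = x" "last Q = y" "w \<in> set Q"
    using path_through_if_distinct_branches xy(3,4) by metis
  moreover have "w \<notin> {x, y}" using distinct_branches_neq[OF xy(3)] by auto
  ultimately show ?thesis using xy(1,2) by blast
qed

lemma steiner_trees_completely_independent_iff:
  assumes stP: "steiner_tree V E S VP EP" and stQ: "steiner_tree V E S VQ EQ" and "S \<noteq> {}"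
  shows "(VP \<inter> VQ = S \<and>
      (\<forall>x1\<in>S. \<forall>x2\<in>S. \<forall>P Q.
         is_path VP EP P \<and> hd P = x1 \<and> last P = x2 \<and>
         is_path VQ EQ Q \<and> hd Q = x1 \<and> last Q = x2 \<longrightarrow> set P \<inter> set Q \<subseteq> {x1, x2}))
    \<longleftrightarrow> (\<forall>w. \<not> (1 < degree EP w \<and> 1 < degree EQ w))"
proof (intro iffI conjI ballI allI impI)
  assume no_common: "\<forall>w. \<not> (1 < degree EP w \<and> 1 < degree EQ w)"
  have "S \<subseteq> VP" "S \<subseteq> VQ" using stP stQ unfolding steiner_tree_def by auto
  moreover have "v \<in> S" if "v \<in> VP" "v \<in> VQ" for v
    using steiner_tree_nonterminal_one_less_degree[OF stP \<open>S \<noteq> {}\<close> \<open>v \<in> VP\<close>]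
      steiner_tree_nonterminal_one_less_degree[OF stQ \<open>S \<noteq> {}\<close> \<open>v \<in> VQ\<close>] no_common by blast
  ultimately show "VP \<inter> VQ = S" by blast
  have sg: "simple_graph VP EP" "simple_graph VQ EQ"
    using stP stQ unfolding steiner_tree_def is_tree_def by auto
  fix x1 x2 P Q
  assume "is_path VP EP P \<and> hd P = x1 \<and> last P = x2 \<and> is_path VQ EQ Q \<and> hd Q = x1 \<and> last Q = x2"
  then show "set P \<inter> set Q \<subseteq> {x1, x2}"
    using path_inner_vertex_one_less_degree[OF sg(1), of P] path_inner_vertex_one_less_degree[OF sg(2), of Q] no_common
    by blast
qed (use steiner_trees_crossing_terminal_paths[OF stP stQ] in blast)

lemma card_le_one_iff_no_two:
  fixes k :: nat
  shows "card {i. i < k \<and> A i} \<le> 1 \<longleftrightarrow> (\<forall>p<k. \<forall>q<k. p < q \<longrightarrow> \<not> (A p \<and> A q))"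
proof -
  have "finite {i. i < k \<and> A i}" by (rule finite_subset[of _ "{..<k}"]) auto
  then show ?thesis
    by (auto simp: card_le_Suc0_iff_eq) (metis linorder_neqE_nat)
qed

lemma CISST_iff_no_common_branching_vertex:
  assumes "\<forall>i<k. steiner_tree V E S (VT i) (ET i)" and "S \<noteq> {}"
  shows "CISST V E S k VT ET \<longleftrightarrow> (\<forall>p<k. \<forall>q<k. p < q \<longrightarrow>
    ET p \<inter> ET q = {} \<and> (\<forall>w. \<not> (1 < degree (ET p) w \<and> 1 < degree (ET q) w)))"
proof -
  have st: "steiner_tree V E S (VT i) (ET i)" if "i < k" for i
    using assms(1) that by blast
  have pair: "(VT p \<inter> VT q = S \<and>
      (\<forall>x1\<in>S. \<forall>x2\<in>S. \<forall>P Q.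
         is_path (VT p) (ET p) P \<and> hd P = x1 \<and> last P = x2 \<and>
         is_path (VT q) (ET q) Q \<and> hd Q = x1 \<and> last Q = x2 \<longrightarrow> set P \<inter> set Q \<subseteq> {x1, x2}))
    \<longleftrightarrow> (\<forall>w. \<not> (1 < degree (ET p) w \<and> 1 < degree (ET q) w))" if "p < k" "q < k" for p q
    using steiner_trees_completely_independent_iff[OF st[OF that(1)] st[OF that(2)] \<open>S \<noteq> {}\<close>] .
  show ?thesis
    unfolding CISST_def by (simp only: pair cong: imp_cong) (simp add: assms(1))
qed

theorem theorem2p1:
  fixes V :: "'a set" and E :: "'a set set" and S :: "'a set" and k :: nat
    and VT :: "nat \<Rightarrow> 'a set" and ET :: "nat \<Rightarrow> 'a set set"
  assumes "simple_graph V E" and "connected_graph V E"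
    and "S \<subseteq> V" and "card S \<ge> 2"
    and "k \<ge> 2"
    and "\<forall>i<k. steiner_tree V E S (VT i) (ET i)"
  shows "CISST V E S k VT ET \<longleftrightarrow>
    ((\<forall>p<k. \<forall>q<k. p \<noteq> q \<longrightarrow> ET p \<inter> ET q = {}) \<and>
     (\<forall>w\<in>V. card {i. i < k \<and> degree (ET i) w > 1} \<le> 1))"
proof -
  have "S \<noteq> {}" using \<open>card S \<ge> 2\<close> by auto
  have "CISST V E S k VT ET \<longleftrightarrow> (\<forall>p<k. \<forall>q<k. p < q \<longrightarrow>
      ET p \<inter> ET q = {} \<and> (\<forall>w. \<not> (1 < degree (ET p) w \<and> 1 < degree (ET q) w)))"
    using assms(6) \<open>S \<noteq> {}\<close> by (rule CISST_iff_no_common_branching_vertex)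
  also have "\<dots> \<longleftrightarrow> (\<forall>p<k. \<forall>q<k. p < q \<longrightarrow> ET p \<inter> ET q = {}) \<and>
      (\<forall>w. \<forall>p<k. \<forall>q<k. p < q \<longrightarrow> \<not> (1 < degree (ET p) w \<and> 1 < degree (ET q) w))"
    by blast
  also have "(\<forall>p<k. \<forall>q<k. p < q \<longrightarrow> ET p \<inter> ET q = {}) \<longleftrightarrow>
      (\<forall>p<k. \<forall>q<k. p \<noteq> q \<longrightarrow> ET p \<inter> ET q = {})"
    by (metis Int_commute nat_neq_iff)
  also have "(\<forall>w. \<forall>p<k. \<forall>q<k. p < q \<longrightarrow> \<not> (1 < degree (ET p) w \<and> 1 < degree (ET q) w)) \<longleftrightarrow>
      (\<forall>w\<in>V. card {i. i < k \<and> degree (ET i) w > 1} \<le> 1)"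
  proof -
    have "w \<in> V" if "i < k" "1 < degree (ET i) w" for i w
      using assms(6) that one_less_degree_in_vertices[OF _ that(2)]
      unfolding steiner_tree_def is_tree_def by blast
    then show ?thesis unfolding card_le_one_iff_no_two by blast
  qed
  finally show ?thesis .
qed

end
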